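(* For all nonnegative integers $L,M$, \[ \sum_{j\in\mathbb{Z}}(-1)^j q^{\frac{1}{2}j(5j+3)} \begin{bmatrix}L+M+j\\ M-j-1\end{bmatrix}\begin{bmatrix}L+M-j\\ M+j\end{bmatrix} =\sum_{n\geq 0}q^{n(n+1)}\begin{bmatrix}2L+M-n\\ 2L+1\end{bmatrix}\begin{bmatrix}L\\ n\end{bmatrix}. \]
   Context: $(x;q)_n=\prod_{i=0}^{n-1}(1-xq^i)$, $(q)_n=(q;q)_n$. The $q$-binomial coefficient is $\begin{bmatrix}n\\ m\end{bmatrix}=\frac{(q)_n}{(q)_m(q)_{n-m}}$ if $m$ and $n-m$ are nonnegative integers and $0$ otherwise. *)

theory Defs
  imports "HOL-Computational_Algebra.Formal_Power_Series"
begin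

definition qpoch :: "'a::field fps \<Rightarrow> nat \<Rightarrow> 'a fps" where
  "qpoch q n = (\<Prod>i<n. 1 - q ^ (i + 1))"

text \<open>Gaussian binomial [n over m] = (q)_n / ((q)_m (q)_(n-m)) if m, n-m >= 0, else 0.
  The denominators have constant coefficient 1, so fps inverse is the genuine inverse.\<close>
definition qbinom :: "'a::field fps \<Rightarrow> int \<Rightarrow> int \<Rightarrow> 'a fps" where
  "qbinom q n m = (if 0 \<le> m \<and> 0 \<le> n - m
     then qpoch q (nat n) * inverse (qpoch q (nat m) * qpoch q (nat (n - m)))
     else 0)"

end

theory Submission
  imports Defs "HOL-Computational_Algebra.Formal_Laurent_Series" "HOL-Library.Groups_Big_Fun"
begin

(*
  The left side B3(L,M) and the right side F3(L,M) belong to two triples of sums: (B1, B3, B1')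
  alternating in j and (F1, F3, F1') positive in n (below bos1, bos3, bos1_raised and ferm1,
  ferm3, ferm1_raised), where B1 and F1 carry the exponents j(5j+1)/2 and n^2, and the primed
  sums have the upper entry of the first q-binomial raised by one.
  Expanding each summand with the q-Pascal rules shows that both triples satisfy
    X3(L,M+1)   = X3(L,M) + q^M X1(L,M),
    X1(L+1,M+1) = X1(L+1,M) + q^(M+1) (X3(L,M+1) + X1'(L,M+1)),
    X1'(L,M+1)  = X1(L,M+1) + q^(2L+1) X1'(L,M);
  on the alternating side the leftover sums either cancel under the involution j -> -1 - j or
  become B1' under j -> -j. The values at L = 0 and at M = 0 agree, so induction on L and then
  on M gives B3 = F3. The recurrences involve negative powers of q, so everything is done for a
  nonzero q that is not a root of unity in an arbitrary field, and then applied to the variable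
  of formal Laurent series.
*)

lemma finite_support_reflect:
  fixes f :: "int \<Rightarrow> 'a::zero"
  assumes "finite {j. f j \<noteq> 0}"
  shows "finite {j. f (c - j) \<noteq> 0}"
  using finite_vimageI[OF assms, of "\<lambda>j. c - j"] by (simp add: inj_def vimage_def)

lemma finite_support_shift:
  fixes f :: "int \<Rightarrow> 'a::zero"
  assumes "finite {j. f j \<noteq> 0}"
  shows "finite {j. f (j - c) \<noteq> 0}"
  using finite_vimageI[OF assms, of "\<lambda>j. j - c"] by (simp add: inj_def vimage_def)

lemma Sum_any_reflect: "(\<Sum>j. f (c - j)) = Sum_any (f :: int \<Rightarrow> 'a::comm_monoid_add)"
  by (rule Sum_any.reindex_cong[symmetric, of "\<lambda>j. c - j"])
    (auto simp: bij_def inj_def surj_def comp_def intro: exI[of _ "c - _"])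

lemma Sum_any_shift: "(\<Sum>j. f (j - c)) = Sum_any (f :: int \<Rightarrow> 'a::comm_monoid_add)"
  by (rule Sum_any.reindex_cong[symmetric, of "\<lambda>j. j - c"])
    (auto simp: bij_def inj_def surj_def comp_def intro: exI[of _ "_ + c"])

lemma Sum_any_eq_single:
  assumes "\<And>j. j \<noteq> a \<Longrightarrow> f j = 0"
  shows "Sum_any f = f a"
  using Sum_any.expand_superset[of "{a}" f] assms by auto

lemma Sum_any_uminus: "(\<Sum>j. - f j) = - Sum_any (f :: 'b \<Rightarrow> 'a::ab_group_add)"
  by (simp add: Sum_any.expand_set sum_negf)

(* Pairing j with the distinct index -1 - j avoids dividing by 2, so characteristic 2 is allowed. *)
lemma Sum_any_eq_0_if_antisymmetric:
  fixes f :: "int \<Rightarrow> 'a::ab_group_add"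
  assumes fin: "finite {j. f j \<noteq> 0}" and antisym: "\<And>j. f (-1 - j) = - f j"
  shows "Sum_any f = 0"
proof -
  define pos where "pos j = (if 0 \<le> j then f j else 0)" for j
  define neg where "neg j = (if j < 0 then f j else 0)" for j
  have fin_pos: "finite {j. pos j \<noteq> 0}" and fin_neg: "finite {j. neg j \<noteq> 0}"
    using fin by (auto simp: pos_def neg_def elim!: rev_finite_subset)
  have "Sum_any f = (\<Sum>j. pos j + neg j)"
    by (rule Sum_any.cong) (simp add: pos_def neg_def)
  also have "\<dots> = Sum_any pos + Sum_any neg"
    by (rule Sum_any.distrib[OF fin_pos fin_neg])
  also have "Sum_any neg = (\<Sum>j. neg (-1 - j))"
    by (rule Sum_any_reflect[symmetric])
  also have "\<dots> = (\<Sum>j. - pos j)"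
    by (rule Sum_any.cong) (simp add: pos_def neg_def antisym)
  finally show ?thesis by (simp add: Sum_any_uminus)
qed

lemma Sum_any_add_mult:
  fixes f g :: "'b \<Rightarrow> 'a::semiring_0"
  assumes "finite {j. f j \<noteq> 0}" "finite {j. g j \<noteq> 0}"
  shows "(\<Sum>j. f j + c * g j) = Sum_any f + c * Sum_any g"
proof -
  have "finite {j. c * g j \<noteq> 0}"
    using assms(2) by (auto elim!: rev_finite_subset)
  then show ?thesis
    using assms by (simp add: Sum_any.distrib Sum_any_right_distrib)
qed

lemma Sum_any_add_mult_add:
  fixes f g h :: "'b \<Rightarrow> 'a::semiring_0"
  assumes "finite {j. f j \<noteq> 0}" "finite {j. g j \<noteq> 0}" "finite {j. h j \<noteq> 0}"
  shows "(\<Sum>j. f j + c * g j + h j) = Sum_any f + c * Sum_any g + Sum_any h"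
proof -
  have "finite {j. f j + c * g j \<noteq> 0}"
    using assms(1,2) by (auto intro: rev_finite_subset[of "{j. f j \<noteq> 0} \<union> {j. g j \<noteq> 0}"])
  then show ?thesis
    using assms by (simp add: Sum_any.distrib Sum_any_add_mult)
qed

definition bos_exp1 :: "int \<Rightarrow> int" where
  "bos_exp1 j = j * (5 * j + 1) div 2"

definition bos_exp3 :: "int \<Rightarrow> int" where
  "bos_exp3 j = j * (5 * j + 3) div 2"

lemma two_bos_exp1: "2 * bos_exp1 j = j * (5 * j + 1)"
  unfolding bos_exp1_def by (cases "even j") auto

lemma two_bos_exp3: "2 * bos_exp3 j = j * (5 * j + 3)"
  unfolding bos_exp3_def by (cases "even j") auto

lemma bos_exp3_conv_bos_exp1: "bos_exp3 j = bos_exp1 j + j"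
  using two_bos_exp1[of j] two_bos_exp3[of j] by (simp add: algebra_simps)

lemma bos_exp1_uminus: "bos_exp1 (- j) = bos_exp1 j - j"
  using two_bos_exp1[of j] two_bos_exp1[of "- j"] by (simp add: algebra_simps)

lemma bos_exp1_reflect: "bos_exp1 (-1 - j) = bos_exp1 j + 4 * j + 2"
  using two_bos_exp1[of j] two_bos_exp1[of "-1 - j"] by (simp add: algebra_simps)

lemma bos_exp3_reflect: "bos_exp3 (-1 - j) = bos_exp3 j + 2 * j + 1"
  using two_bos_exp3[of j] two_bos_exp3[of "-1 - j"] by (simp add: algebra_simps)

lemma bos_exp3_nonneg: "0 \<le> bos_exp3 j"
proof -
  have "0 \<le> j * (5 * j + 3)"
    by (cases "0 \<le> j") (simp_all add: mult_nonpos_nonpos)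
  then show ?thesis
    using two_bos_exp3[of j] by linarith
qed

lemma neg_one_power_abs_reflect: "(-1) ^ nat \<bar>-1 - j\<bar> = - ((-1) ^ nat \<bar>j\<bar> :: 'a::ring_1)"
  by (cases "0 \<le> j") (auto simp: minus_one_power_iff even_nat_iff)

locale generic_q =
  fixes q :: "'a::field"
  assumes nonzero [simp]: "q \<noteq> 0"
    and not_root_of_unity: "0 < n \<Longrightarrow> q ^ n \<noteq> 1"
begin

definition qpochhammer :: "nat \<Rightarrow> 'a" where
  "qpochhammer n = (\<Prod>i<n. 1 - q ^ (i + 1))"

definition qbinomial :: "int \<Rightarrow> int \<Rightarrow> 'a" where
  "qbinomial n k = (if 0 \<le> k \<and> k \<le> n
     then qpochhammer (nat n) / (qpochhammer (nat k) * qpochhammer (nat (n - k))) else 0)"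

lemma qpochhammer_0 [simp]: "qpochhammer 0 = 1"
  by (simp add: qpochhammer_def)

lemma qpochhammer_Suc: "qpochhammer (Suc n) = qpochhammer n * (1 - q ^ Suc n)"
  by (simp add: qpochhammer_def)

lemma one_minus_power_nonzero: "1 - q ^ Suc n \<noteq> 0"
  using not_root_of_unity[of "Suc n"] by simp

lemma qpochhammer_nonzero: "qpochhammer n \<noteq> 0"
  using one_minus_power_nonzero by (simp add: qpochhammer_def)

lemma qbinomial_eq_0_iff: "qbinomial n k = 0 \<longleftrightarrow> \<not> (0 \<le> k \<and> k \<le> n)"
  by (simp add: qbinomial_def qpochhammer_nonzero)

lemma qbinomial_out_of_range: "\<not> (0 \<le> k \<and> k \<le> n) \<Longrightarrow> qbinomial n k = 0"
  by (simp add: qbinomial_eq_0_iff)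

lemma qbinomial_0_right: "0 \<le> n \<Longrightarrow> qbinomial n 0 = 1"
  by (simp add: qbinomial_def qpochhammer_nonzero)

lemma qbinomial_diag: "0 \<le> n \<Longrightarrow> qbinomial n n = 1"
  by (simp add: qbinomial_def qpochhammer_nonzero)

lemma qbinomial_symmetric: "qbinomial n (n - k) = qbinomial n k"
  by (auto simp: qbinomial_def mult.commute)

lemma qbinomial_of_nat:
  "k \<le> n \<Longrightarrow>
    qbinomial (int n) (int k) = qpochhammer n / (qpochhammer k * qpochhammer (n - k))"
  by (simp add: qbinomial_def flip: of_nat_diff)

lemma qbinomial_pascal:
  assumes "n \<noteq> 0 \<or> k \<noteq> 0"
  shows "qbinomial n k = qbinomial (n - 1) (k - 1) + q powi k * qbinomial (n - 1) k"
proof (cases "0 < k \<and> k < n")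
  case True
  define a where "a = nat (k - 1)"
  define b where "b = nat (n - k - 1)"
  have n: "n = int (Suc (Suc (a + b)))" and n1: "n - 1 = int (Suc (a + b))"
    and k: "k = int (Suc a)" and k1: "k - 1 = int a"
    using True by (simp_all add: a_def b_def)
  define P u v where "P = qpochhammer (Suc (a + b))" and "u = q ^ Suc a" and "v = q ^ Suc b"
  have nonzero: "qpochhammer a \<noteq> 0" "qpochhammer b \<noteq> 0" "1 - u \<noteq> 0" "1 - v \<noteq> 0"
    using qpochhammer_nonzero one_minus_power_nonzero by (simp_all add: u_def v_def)
  have "qbinomial n k
      = qpochhammer (Suc (Suc (a + b))) / (qpochhammer (Suc a) * qpochhammer (Suc b))"
    unfolding n k by (subst qbinomial_of_nat) simp_all
  also have "\<dots> = P * (1 - u * v) / (qpochhammer a * (1 - u) * (qpochhammer b * (1 - v)))"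
    unfolding P_def u_def v_def qpochhammer_Suc[of "Suc (a + b)"] qpochhammer_Suc[of a]
      qpochhammer_Suc[of b]
    by (simp add: mult.assoc flip: power_add)
  also have "\<dots> = P / (qpochhammer a * (qpochhammer b * (1 - v)))
      + u * (P / (qpochhammer a * (1 - u) * qpochhammer b))"
    using nonzero by (simp add: divide_simps) (simp add: algebra_simps)
  also have "\<dots> = qbinomial (n - 1) (k - 1) + q powi k * qbinomial (n - 1) k"
  proof -
    have "qbinomial (n - 1) (k - 1) = P / (qpochhammer a * qpochhammer (Suc b))"
      unfolding n1 k1 P_def by (subst qbinomial_of_nat) simp_all
    moreover have "qbinomial (n - 1) k = P / (qpochhammer (Suc a) * qpochhammer b)"
      unfolding n1 k P_def by (subst qbinomial_of_nat) simp_all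
    moreover have "q powi k = u"
      unfolding k u_def by (simp only: power_int_of_nat)
    ultimately show ?thesis
      unfolding u_def v_def by (simp add: qpochhammer_Suc mult.assoc)
  qed
  finally show ?thesis .
next
  case False
  then consider "k < 0" | "n < k" | "k = 0" "n < 0" | "k = 0" "0 < n" | "0 < k" "k = n"
    using assms by linarith
  then show ?thesis
    by cases (simp_all add: qbinomial_out_of_range qbinomial_0_right qbinomial_diag)
qed

lemma qbinomial_pascal_dual:
  assumes "n \<noteq> 0 \<or> k \<noteq> 0"
  shows "qbinomial n k = q powi (n - k) * qbinomial (n - 1) (k - 1) + qbinomial (n - 1) k"
proof -
  have "qbinomial n k = qbinomial n (n - k)"
    by (simp add: qbinomial_symmetric)
  also have "\<dots> = qbinomial (n - 1) (n - k - 1) + q powi (n - k) * qbinomial (n - 1) (n - k)"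
    using assms by (intro qbinomial_pascal) auto
  also have "qbinomial (n - 1) (n - k - 1) = qbinomial (n - 1) k"
    using qbinomial_symmetric[of "n - 1" k] by (simp add: diff_diff_eq add.commute)
  also have "qbinomial (n - 1) (n - k) = qbinomial (n - 1) (k - 1)"
    using qbinomial_symmetric[of "n - 1" "k - 1"] by simp
  finally show ?thesis
    by simp
qed

lemma finite_support_times_qbinomial_diag: "finite {j. f j * qbinomial (a - j) (b + j) \<noteq> 0}"
  by (rule finite_subset[of _ "{-b..a}"]) (auto simp: qbinomial_eq_0_iff)

lemma finite_support_times_qbinomial: "finite {n. f n * qbinomial a n \<noteq> 0}"
  by (rule finite_subset[of _ "{0..a}"]) (auto simp: qbinomial_eq_0_iff)

definition bos1_term :: "int \<Rightarrow> int \<Rightarrow> int \<Rightarrow> 'a" where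
  "bos1_term L M j = (-1) ^ nat \<bar>j\<bar> * q powi bos_exp1 j
     * qbinomial (L + M + j) (M - j) * qbinomial (L + M - j) (M + j)"

definition bos3_term :: "int \<Rightarrow> int \<Rightarrow> int \<Rightarrow> 'a" where
  "bos3_term L M j = (-1) ^ nat \<bar>j\<bar> * q powi bos_exp3 j
     * qbinomial (L + M + j) (M - j - 1) * qbinomial (L + M - j) (M + j)"

definition bos1_raised_term :: "int \<Rightarrow> int \<Rightarrow> int \<Rightarrow> 'a" where
  "bos1_raised_term L M j = (-1) ^ nat \<bar>j\<bar> * q powi bos_exp1 j
     * qbinomial (L + M + j + 1) (M - j) * qbinomial (L + M - j) (M + j)"

definition ferm1_term :: "int \<Rightarrow> int \<Rightarrow> int \<Rightarrow> 'a" where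
  "ferm1_term L M n = q powi (n * n) * qbinomial (2 * L + M - n) (2 * L) * qbinomial L n"

definition ferm3_term :: "int \<Rightarrow> int \<Rightarrow> int \<Rightarrow> 'a" where
  "ferm3_term L M n = q powi (n * n + n) * qbinomial (2 * L + M - n) (2 * L + 1) * qbinomial L n"

definition ferm1_raised_term :: "int \<Rightarrow> int \<Rightarrow> int \<Rightarrow> 'a" where
  "ferm1_raised_term L M n =
     q powi (n * n) * qbinomial (2 * L + M + 1 - n) (2 * L + 1) * qbinomial L n"

definition bos1 :: "int \<Rightarrow> int \<Rightarrow> 'a" where
  "bos1 L M = Sum_any (bos1_term L M)"

definition bos3 :: "int \<Rightarrow> int \<Rightarrow> 'a" where
  "bos3 L M = Sum_any (bos3_term L M)"

definition bos1_raised :: "int \<Rightarrow> int \<Rightarrow> 'a" where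
  "bos1_raised L M = Sum_any (bos1_raised_term L M)"

definition ferm1 :: "int \<Rightarrow> int \<Rightarrow> 'a" where
  "ferm1 L M = Sum_any (ferm1_term L M)"

definition ferm3 :: "int \<Rightarrow> int \<Rightarrow> 'a" where
  "ferm3 L M = Sum_any (ferm3_term L M)"

definition ferm1_raised :: "int \<Rightarrow> int \<Rightarrow> 'a" where
  "ferm1_raised L M = Sum_any (ferm1_raised_term L M)"


lemma finite_support_terms:
  "finite {j. bos1_term L M j \<noteq> 0}" "finite {j. bos3_term L M j \<noteq> 0}"
  "finite {j. bos1_raised_term L M j \<noteq> 0}" "finite {n. ferm1_term L M n \<noteq> 0}"
  "finite {n. ferm3_term L M n \<noteq> 0}" "finite {n. ferm1_raised_term L M n \<noteq> 0}"
  unfolding bos1_term_def bos3_term_def bos1_raised_term_def ferm1_term_def ferm3_term_def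
    ferm1_raised_term_def
  by (rule finite_support_times_qbinomial_diag finite_support_times_qbinomial)+

lemma bos3_succ:
  assumes "0 \<le> L" "0 \<le> M"
  shows "bos3 L (M + 1) = bos3 L M + q powi M * bos1 L M"
proof -
  define R where "R j = (-1) ^ nat \<bar>j\<bar> * q powi (bos_exp3 j + M + 1 + j)
    * qbinomial (L + M + 1 + j) (M - j) * qbinomial (L + M - j) (M + 1 + j)" for j
  have "bos3_term L (M + 1) j = bos3_term L M j + q powi M * bos1_term L M j + R j" for j
  proof -
    have "qbinomial (L + M + 1 + j) (M - j)
        = qbinomial (L + M + j) (M - j - 1) + q powi (M - j) * qbinomial (L + M + j) (M - j)"
      using assms by (subst qbinomial_pascal) (auto simp: algebra_simps)
    moreover have "qbinomial (L + M + 1 - j) (M + 1 + j)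
        = qbinomial (L + M - j) (M + j) + q powi (M + 1 + j) * qbinomial (L + M - j) (M + 1 + j)"
      using assms by (subst qbinomial_pascal) (auto simp: algebra_simps)
    ultimately show ?thesis
      unfolding bos3_term_def bos1_term_def R_def
      by (simp add: algebra_simps)
        (simp (no_asm) add: bos_exp3_conv_bos_exp1 power_int_add power_int_diff power_int_mult
          power2_eq_square field_simps)
  qed
  moreover have "finite {j. R j \<noteq> 0}"
    unfolding R_def by (rule finite_support_times_qbinomial_diag)
  moreover have "Sum_any R = 0"
    using \<open>finite {j. R j \<noteq> 0}\<close>
  proof (rule Sum_any_eq_0_if_antisymmetric)
    show "R (-1 - j) = - R j" for j
      unfolding R_def bos_exp3_reflect neg_one_power_abs_reflect by (simp add: algebra_simps)
  qed
  ultimately show ?thesis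
    by (simp add: bos3_def bos1_def Sum_any_add_mult_add finite_support_terms)
qed

lemma bos1_succ_succ:
  assumes "0 \<le> L" "0 \<le> M"
  shows "bos1 (L + 1) (M + 1)
    = bos1 (L + 1) M + q powi (M + 1) * (bos3 L (M + 1) + bos1_raised L (M + 1))"
proof -
  have "bos1_term (L + 1) (M + 1) j = bos1_term (L + 1) M j + q powi (M + 1) * bos3_term L (M + 1) j
      + q powi (M + 1) * bos1_raised_term L (M + 1) (- j)" for j
  proof -
    have "qbinomial (L + M + 2 + j) (M + 1 - j)
        = qbinomial (L + M + 1 + j) (M - j)
          + q powi (M + 1 - j) * qbinomial (L + M + 1 + j) (M + 1 - j)"
      using assms by (subst qbinomial_pascal) (auto simp: algebra_simps)
    moreover have "qbinomial (L + M + 2 - j) (M + 1 + j)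
        = qbinomial (L + M + 1 - j) (M + j)
          + q powi (M + 1 + j) * qbinomial (L + M + 1 - j) (M + 1 + j)"
      using assms by (subst qbinomial_pascal) (auto simp: algebra_simps)
    ultimately show ?thesis
      unfolding bos1_term_def bos3_term_def bos1_raised_term_def
      by (simp add: algebra_simps)
        (simp (no_asm) add: bos_exp3_conv_bos_exp1 bos_exp1_uminus power_int_add power_int_diff
          field_simps)
  qed
  moreover have fin: "finite {j. bos1_raised_term L (M + 1) (- j) \<noteq> 0}"
    using finite_support_reflect[OF finite_support_terms(3), where c = 0] by simp
  moreover from fin have "finite {j. q powi (M + 1) * bos1_raised_term L (M + 1) (- j) \<noteq> 0}"
    by (rule rev_finite_subset) auto
  moreover have "(\<Sum>j. q powi (M + 1) * bos1_raised_term L (M + 1) (- j))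
      = q powi (M + 1) * bos1_raised L (M + 1)"
    using Sum_any_right_distrib[OF fin]
      Sum_any_reflect[where c = 0, of "bos1_raised_term L (M + 1)"]
    by (simp add: bos1_raised_def)
  ultimately have "bos1 (L + 1) (M + 1)
      = bos1 (L + 1) M + q powi (M + 1) * bos3 L (M + 1) + q powi (M + 1) * bos1_raised L (M + 1)"
    by (simp add: bos1_def bos3_def Sum_any_add_mult_add finite_support_terms)
  then show ?thesis
    by (simp add: algebra_simps)
qed

lemma bos1_raised_succ:
  assumes "0 \<le> L" "0 \<le> M"
  shows "bos1_raised L (M + 1) = bos1 L (M + 1) + q powi (2 * L + 1) * bos1_raised L M"
proof -
  define V where "V j = (-1) ^ nat \<bar>j\<bar> * q powi (bos_exp1 j + L + 2 * j + 1)
    * qbinomial (L + M + 1 + j) (M - j) * qbinomial (L + M - j) (M + 1 + j)" for j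
  have "bos1_raised_term L (M + 1) j
      = bos1_term L (M + 1) j + q powi (2 * L + 1) * bos1_raised_term L M j + V j" for j
  proof -
    have "qbinomial (L + M + 2 + j) (M + 1 - j)
        = q powi (L + 2 * j + 1) * qbinomial (L + M + 1 + j) (M - j)
          + qbinomial (L + M + 1 + j) (M + 1 - j)"
      using assms by (subst qbinomial_pascal_dual) (auto simp: algebra_simps)
    moreover have "qbinomial (L + M + 1 - j) (M + 1 + j)
        = q powi (L - 2 * j) * qbinomial (L + M - j) (M + j) + qbinomial (L + M - j) (M + 1 + j)"
      using assms by (subst qbinomial_pascal_dual) (auto simp: algebra_simps)
    ultimately show ?thesis
      unfolding bos1_term_def bos1_raised_term_def V_def
      by (simp add: algebra_simps)
        (simp (no_asm) add: power_int_add power_int_diff power_int_mult power2_eq_square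
          field_simps)
  qed
  moreover have "finite {j. V j \<noteq> 0}"
    unfolding V_def by (rule finite_support_times_qbinomial_diag)
  moreover have "Sum_any V = 0"
    using \<open>finite {j. V j \<noteq> 0}\<close>
  proof (rule Sum_any_eq_0_if_antisymmetric)
    show "V (-1 - j) = - V j" for j
      unfolding V_def bos_exp1_reflect neg_one_power_abs_reflect by (simp add: algebra_simps)
  qed
  ultimately show ?thesis
    by (simp add: bos1_def bos1_raised_def Sum_any_add_mult_add finite_support_terms)
qed

lemma ferm3_succ:
  assumes "0 \<le> L"
  shows "ferm3 L (M + 1) = ferm3 L M + q powi M * ferm1 L M"
proof -
  have "ferm3_term L (M + 1) n = ferm3_term L M n + q powi M * ferm1_term L M n" for n
  proof -
    have "qbinomial (2 * L + M + 1 - n) (2 * L + 1)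
        = q powi (M - n) * qbinomial (2 * L + M - n) (2 * L)
          + qbinomial (2 * L + M - n) (2 * L + 1)"
      using assms by (subst qbinomial_pascal_dual) (auto simp: algebra_simps)
    then show ?thesis
      unfolding ferm3_term_def ferm1_term_def
      by (simp add: algebra_simps) (simp (no_asm) add: power_int_add power_int_diff field_simps)
  qed
  then show ?thesis
    by (simp add: ferm3_def ferm1_def Sum_any_add_mult finite_support_terms)
qed

lemma ferm1_succ_succ:
  assumes "0 \<le> L"
  shows "ferm1 (L + 1) (M + 1)
    = ferm1 (L + 1) M + q powi (M + 1) * (ferm3 L (M + 1) + ferm1_raised L (M + 1))"
proof -
  have "ferm1_term (L + 1) (M + 1) n = ferm1_term (L + 1) M n
      + q powi (M + 1) * ferm1_raised_term L (M + 1) n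
      + q powi (M + 1) * ferm3_term L (M + 1) (n - 1)" for n
  proof -
    have "qbinomial (2 * L + M + 3 - n) (2 * L + 2)
        = q powi (M + 1 - n) * qbinomial (2 * L + M + 2 - n) (2 * L + 1)
          + qbinomial (2 * L + M + 2 - n) (2 * L + 2)"
      using assms by (subst qbinomial_pascal_dual) (auto simp: algebra_simps)
    moreover have "qbinomial (L + 1) n = qbinomial L (n - 1) + q powi n * qbinomial L n"
      using assms by (subst qbinomial_pascal) (auto simp: algebra_simps)
    ultimately show ?thesis
      unfolding ferm1_term_def ferm3_term_def ferm1_raised_term_def
      by (simp add: algebra_simps) (simp (no_asm) add: power_int_add power_int_diff field_simps)
  qed
  moreover have fin: "finite {n. ferm3_term L (M + 1) (n - 1) \<noteq> 0}"
    by (rule finite_support_shift[OF finite_support_terms(5)])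
  moreover from fin have "finite {n. q powi (M + 1) * ferm3_term L (M + 1) (n - 1) \<noteq> 0}"
    by (rule rev_finite_subset) auto
  moreover have "(\<Sum>n. q powi (M + 1) * ferm3_term L (M + 1) (n - 1))
      = q powi (M + 1) * ferm3 L (M + 1)"
    using Sum_any_right_distrib[OF fin] Sum_any_shift[where c = 1, of "ferm3_term L (M + 1)"]
    by (simp add: ferm3_def)
  ultimately have "ferm1 (L + 1) (M + 1)
      = ferm1 (L + 1) M + q powi (M + 1) * ferm1_raised L (M + 1) + q powi (M + 1) * ferm3 L (M + 1)"
    by (simp add: ferm1_def ferm1_raised_def Sum_any_add_mult_add finite_support_terms)
  then show ?thesis
    by (simp add: algebra_simps)
qed

lemma ferm1_raised_succ:
  assumes "0 \<le> L"
  shows "ferm1_raised L (M + 1) = ferm1 L (M + 1) + q powi (2 * L + 1) * ferm1_raised L M"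
proof -
  have "ferm1_raised_term L (M + 1) n
      = ferm1_term L (M + 1) n + q powi (2 * L + 1) * ferm1_raised_term L M n" for n
  proof -
    have "qbinomial (2 * L + M + 2 - n) (2 * L + 1)
        = qbinomial (2 * L + M + 1 - n) (2 * L)
          + q powi (2 * L + 1) * qbinomial (2 * L + M + 1 - n) (2 * L + 1)"
      using assms by (subst qbinomial_pascal) (auto simp: algebra_simps)
    then show ?thesis
      by (simp add: ferm1_term_def ferm1_raised_term_def algebra_simps)
  qed
  then show ?thesis
    by (simp add: ferm1_def ferm1_raised_def Sum_any_add_mult finite_support_terms)
qed

lemma bos_zero_right:
  assumes "0 \<le> L"
  shows "bos1 L 0 = 1" "bos3 L 0 = 0" "bos1_raised L 0 = 1"
proof -
  have "bos1 L 0 = bos1_term L 0 0" "bos3 L 0 = bos3_term L 0 0"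
    "bos1_raised L 0 = bos1_raised_term L 0 0"
    unfolding bos1_def bos3_def bos1_raised_def
    by (rule Sum_any_eq_single;
        auto simp: bos1_term_def bos3_term_def bos1_raised_term_def qbinomial_eq_0_iff)+
  then show "bos1 L 0 = 1" "bos3 L 0 = 0" "bos1_raised L 0 = 1"
    using assms by (simp_all add: bos1_term_def bos3_term_def bos1_raised_term_def bos_exp1_def
        qbinomial_0_right qbinomial_eq_0_iff)
qed

lemma bos1_zero_left:
  assumes "0 \<le> M"
  shows "bos1 0 M = 1"
proof -
  have "bos1 0 M = bos1_term 0 M 0"
    unfolding bos1_def by (rule Sum_any_eq_single) (auto simp: bos1_term_def qbinomial_eq_0_iff)
  then show ?thesis
    using assms by (simp add: bos1_term_def bos_exp1_def qbinomial_diag)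
qed

lemma ferm_zero_right:
  assumes "0 \<le> L"
  shows "ferm1 L 0 = 1" "ferm3 L 0 = 0" "ferm1_raised L 0 = 1"
proof -
  have "ferm1 L 0 = ferm1_term L 0 0" "ferm3 L 0 = ferm3_term L 0 0"
    "ferm1_raised L 0 = ferm1_raised_term L 0 0"
    unfolding ferm1_def ferm3_def ferm1_raised_def
    by (rule Sum_any_eq_single;
        auto simp: ferm1_term_def ferm3_term_def ferm1_raised_term_def qbinomial_eq_0_iff)+
  then show "ferm1 L 0 = 1" "ferm3 L 0 = 0" "ferm1_raised L 0 = 1"
    using assms by (simp_all add: ferm1_term_def ferm3_term_def ferm1_raised_term_def
        qbinomial_0_right qbinomial_diag qbinomial_eq_0_iff)
qed

lemma ferm1_zero_left:
  assumes "0 \<le> M"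
  shows "ferm1 0 M = 1"
proof -
  have "ferm1 0 M = ferm1_term 0 M 0"
    unfolding ferm1_def by (rule Sum_any_eq_single) (auto simp: ferm1_term_def qbinomial_eq_0_iff)
  then show ?thesis
    using assms by (simp add: ferm1_term_def qbinomial_0_right qbinomial_diag)
qed

lemma bos3_eq_ferm3_if_bos1_eq_ferm1:
  assumes "0 \<le> L" and bos1: "\<And>m. 0 \<le> m \<Longrightarrow> bos1 L m = ferm1 L m" and "0 \<le> M"
  shows "bos3 L M = ferm3 L M"
  using \<open>0 \<le> M\<close>
proof (induction M rule: int_ge_induct)
  case base
  then show ?case
    using assms(1) by (simp add: bos_zero_right ferm_zero_right)
next
  case (step M)
  then show ?case
    using assms(1) bos1 by (simp add: bos3_succ ferm3_succ)
qed

lemma bos1_raised_eq_ferm1_raised_if_bos1_eq_ferm1: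
  assumes "0 \<le> L" and bos1: "\<And>m. 0 \<le> m \<Longrightarrow> bos1 L m = ferm1 L m" and "0 \<le> M"
  shows "bos1_raised L M = ferm1_raised L M"
  using \<open>0 \<le> M\<close>
proof (induction M rule: int_ge_induct)
  case base
  then show ?case
    using assms(1) by (simp add: bos_zero_right ferm_zero_right)
next
  case (step M)
  then show ?case
    using assms(1) bos1[of "M + 1"] by (simp add: bos1_raised_succ ferm1_raised_succ)
qed

lemma bos1_eq_ferm1:
  assumes "0 \<le> L" "0 \<le> M"
  shows "bos1 L M = ferm1 L M"
  using assms
proof (induction L arbitrary: M rule: int_ge_induct)
  case base
  then show ?case
    by (simp add: bos1_zero_left ferm1_zero_left)
next
  case (step L)
  have bos3: "bos3 L m = ferm3 L m" and raised: "bos1_raised L m = ferm1_raised L m" if "0 \<le> m" for m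
    using step bos3_eq_ferm3_if_bos1_eq_ferm1 bos1_raised_eq_ferm1_raised_if_bos1_eq_ferm1 that
    by blast+
  show ?case
    using \<open>0 \<le> M\<close>
  proof (induction M rule: int_ge_induct)
    case base
    then show ?case
      using step.hyps by (simp add: bos_zero_right ferm_zero_right)
  next
    case (step M)
    then show ?case
      using \<open>0 \<le> L\<close> bos3 raised by (simp add: bos1_succ_succ ferm1_succ_succ)
  qed
qed

lemma bos3_eq_ferm3: "0 \<le> L \<Longrightarrow> 0 \<le> M \<Longrightarrow> bos3 L M = ferm3 L M"
  by (simp add: bos3_eq_ferm3_if_bos1_eq_ferm1 bos1_eq_ferm1)

end

lemma generic_q_fls_X: "generic_q (fls_X :: 'a::field fls)"
proof
  show "fls_X \<noteq> (0 :: 'a fls)"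
    by simp
  show "fls_X ^ n \<noteq> (1 :: 'a fls)" if "0 < n" for n
  proof
    assume "fls_X ^ n = (1 :: 'a fls)"
    then have "fls_nth (fls_X ^ n :: 'a fls) 0 = 1"
      by simp
    with that show False
      by simp
  qed
qed

interpretation fls: generic_q "fls_X :: 'a::field fls"
  by (rule generic_q_fls_X)

lemma fps_to_fls_sum: "fps_to_fls (sum f A) = (\<Sum>x\<in>A. fps_to_fls (f x))"
  using sum_comp_morphism[of fps_to_fls f A] by (simp add: comp_def)

lemma fps_to_fls_qpoch: "fps_to_fls (qpoch fps_X n :: 'a::field fps) = fls.qpochhammer n"
  unfolding qpoch_def fls.qpochhammer_def
  by (induction n) (simp_all add: fls_times_fps_to_fls fps_to_fls_power)

lemma qpoch_nth_0: "qpoch (fps_X :: 'a::field fps) n $ 0 = 1"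
  unfolding qpoch_def by (induction n) simp_all

lemma fps_to_fls_qbinom: "fps_to_fls (qbinom fps_X n k :: 'a::field fps) = fls.qbinomial n k"
proof (cases "0 \<le> k \<and> k \<le> n")
  case True
  define D where "D = (qpoch fps_X (nat k) * qpoch fps_X (nat (n - k)) :: 'a fps)"
  have "subdegree D = 0"
    by (rule subdegree_eq_0) (simp add: D_def qpoch_nth_0)
  then have "fps_to_fls (inverse D) = inverse (fps_to_fls D)"
    by (simp add: fls_inverse_fps_to_fls)
  with True show ?thesis
    by (simp add: qbinom_def fls.qbinomial_def D_def fls_times_fps_to_fls fps_to_fls_qpoch
        divide_inverse)
next
  case False
  then show ?thesis
    by (auto simp: qbinom_def fls.qbinomial_def)
qed

lemma fps_to_fls_bos3_sum:
  fixes L M :: nat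
  shows "fps_to_fls (\<Sum>j\<in>{-(int L + int M + 1)..int L + int M + 1}.
            (-1) ^ nat \<bar>j\<bar> * fps_X ^ nat ((j * (5 * j + 3)) div 2)
            * qbinom fps_X (int L + int M + j) (int M - j - 1)
            * qbinom fps_X (int L + int M - j) (int M + j))
       = (fls.bos3 (int L) (int M) :: 'a::field fls)"
proof -
  let ?I = "{-(int L + int M + 1)..int L + int M + 1}"
  have "fls_X ^ nat (j * (5 * j + 3) div 2) = (fls_X powi bos_exp3 j :: 'a fls)" for j
    using bos_exp3_nonneg[of j] by (simp add: bos_exp3_def power_int_def)
  then have "fps_to_fls (\<Sum>j\<in>?I. (-1) ^ nat \<bar>j\<bar> * fps_X ^ nat ((j * (5 * j + 3)) div 2)
            * qbinom fps_X (int L + int M + j) (int M - j - 1)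
            * qbinom fps_X (int L + int M - j) (int M + j))
      = (\<Sum>j\<in>?I. fls.bos3_term (int L) (int M) j :: 'a fls)"
    by (simp add: fps_to_fls_sum fls_times_fps_to_fls fps_to_fls_power fps_to_fls_qbinom
        fls.bos3_term_def)
  also have "\<dots> = fls.bos3 (int L) (int M)"
    unfolding fls.bos3_def
    by (rule Sum_any.expand_superset[symmetric])
      (auto simp: fls.bos3_term_def fls.qbinomial_eq_0_iff)
  finally show ?thesis .
qed

lemma fps_to_fls_ferm3_sum:
  fixes L M :: nat
  shows "fps_to_fls (\<Sum>n\<in>{0..2 * L + M + 1}.
            fps_X ^ (n * (n + 1))
            * qbinom fps_X (int (2 * L + M) - int n) (int (2 * L + 1))
            * qbinom fps_X (int L) (int n))
       = (fls.ferm3 (int L) (int M) :: 'a::field fls)"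
proof -
  have "fls.ferm3 (int L) (int M)
      = (\<Sum>n\<in>int ` {0..2 * L + M + 1}. fls.ferm3_term (int L) (int M) n :: 'a fls)"
    unfolding fls.ferm3_def
    by (rule Sum_any.expand_superset)
      (auto simp: fls.ferm3_term_def fls.qbinomial_eq_0_iff image_iff intro!: bexI[of _ "nat _"])
  also have "\<dots> = (\<Sum>n\<in>{0..2 * L + M + 1}. fls.ferm3_term (int L) (int M) (int n))"
    by (subst sum.reindex) (simp_all add: inj_on_def comp_def)
  also have "\<dots> = fps_to_fls (\<Sum>n\<in>{0..2 * L + M + 1}. fps_X ^ (n * (n + 1))
            * qbinom fps_X (int (2 * L + M) - int n) (int (2 * L + 1))
            * qbinom fps_X (int L) (int n))"
    unfolding fps_to_fls_sum
  proof (rule sum.cong[OF refl])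
    fix n
    have "int n * int n + int n = int (n * (n + 1))"
      by (simp add: algebra_simps)
    then have power: "(fls_X :: 'a fls) powi (int n * int n + int n) = fls_X ^ (n * (n + 1))"
      by (simp only: power_int_of_nat)
    have "fls.ferm3_term (int L) (int M) (int n) = (fls_X :: 'a fls) ^ (n * (n + 1))
        * fls.qbinomial (int (2 * L + M) - int n) (int (2 * L + 1)) * fls.qbinomial (int L) (int n)"
      by (simp only: fls.ferm3_term_def power) (simp add: algebra_simps)
    then show "fls.ferm3_term (int L) (int M) (int n)
        = fps_to_fls ((fps_X :: 'a fps) ^ (n * (n + 1))
            * qbinom fps_X (int (2 * L + M) - int n) (int (2 * L + 1))
            * qbinom fps_X (int L) (int n))"
      by (simp add: fls_times_fps_to_fls fps_to_fls_power fps_to_fls_qbinom)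
  qed
  finally show ?thesis ..
qed

theorem lemma3p2:
  fixes L M :: nat
  defines "q \<equiv> (fps_X :: 'a::field fps)"
  shows "(\<Sum>j\<in>{-(int L + int M + 1)..int L + int M + 1}.
            (-1) ^ nat \<bar>j\<bar> * q ^ nat ((j * (5 * j + 3)) div 2)
            * qbinom q (int L + int M + j) (int M - j - 1)
            * qbinom q (int L + int M - j) (int M + j))
       = (\<Sum>n\<in>{0..2 * L + M + 1}.
            q ^ (n * (n + 1))
            * qbinom q (int (2 * L + M) - int n) (int (2 * L + 1))
            * qbinom q (int L) (int n))"
    (is "?lhs = ?rhs")
proof -
  have "fps_to_fls ?lhs = fls.bos3 (int L) (int M)"
    unfolding q_def by (rule fps_to_fls_bos3_sum)
  also have "\<dots> = fls.ferm3 (int L) (int M)"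
    by (simp add: fls.bos3_eq_ferm3)
  also have "\<dots> = fps_to_fls ?rhs"
    unfolding q_def by (rule fps_to_fls_ferm3_sum[symmetric])
  finally show ?thesis
    by (simp only: fps_to_fls_eq_iff)
qed

end
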